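(* West's bijection from $\mathrm{Av}_n(123)$ to $\mathrm{Av}_n(132)$ maps $\mathrm{Av}_n(123,132^{\star})$ bijectively onto $\mathrm{Av}_n(132,123^{\star})$. In particular $|\mathrm{Av}_n(123,132^{\star})|=|\mathrm{Av}_n(132,123^{\star})|$.
   Context: For $w=w_1\cdots w_{m}\in S_{m}$ and $1\le i\le m+1$, let $w^i$ be obtained by inserting $m+1$ immediately before $w_i$ (at the end if $i=m+1$); site $i$ is active with respect to a pattern $y$ if $w^i$ avoids $y$. For $x\in S_n$, $\mathrm{small}_k(x)$ is the subsequence of entries $1,\dots,k$, and $\mathrm{Act}_j(x;y)$ is the set of active sites of $\mathrm{small}_{n+1-j}(x)$ with respect to $y$. The signature of $x$ with respect to $y$ is the word $\mathfrak{S}(x;y)=|\mathrm{Act}_1(x;y)|\cdots|\mathrm{Act}_{n-1}(x;y)|$. West proved that a permutation in $\mathrm{Av}_n(123)$ (resp. $\mathrm{Av}_n(132)$) is uniquely determined by its signature with respect to $123$ (resp. $132$), and that $\{\mathfrak{S}(x;123):x\in\mathrm{Av}_n(123)\}=\{\mathfrak{S}(x;132):x\in\mathrm{Av}_n(132)\}$; West's bijection sends $x\in\mathrm{Av}_n(123)$ to the unique $x'\in\mathrm{Av}_n(132)$ with $\mathfrak{S}(x';132)=\mathfrak{S}(x;123)$. $\mathrm{Av}_n(\cdot)$ denotes the set of permutations in $S_n$ avoiding the listed patterns. An occurrence of $132^{\star}$ in $x$ is a pair of indices $a<b<n$ with $x_a<x_{b+1}$ and $x_b=x_{b+1}+1$;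 an occurrence of $123^{\star}$ is a pair $a<b<n$ with $x_a<x_b$ and $x_{b+1}=x_b+1$. *)

theory Defs
  imports Main "HOL-Library.Sublist"
begin

text \<open>Permutations are lists of naturals; x \<in> S_n iff x lists 1..n each exactly once.
  Positions in lists are 0-based; the paper's 1-based positions are translated accordingly.\<close>

definition is_perm :: "nat \<Rightarrow> nat list \<Rightarrow> bool" where
  "is_perm n x \<longleftrightarrow> distinct x \<and> set x = {1..n}"

definition order_iso :: "nat list \<Rightarrow> nat list \<Rightarrow> bool" where
  "order_iso a b \<longleftrightarrow> length a = length b \<and>
     (\<forall>i<length a. \<forall>j<length a. a!i < a!j \<longleftrightarrow> b!i < b!j)"

definition contains :: "nat list \<Rightarrow> nat list \<Rightarrow> bool" where
  "contains x y \<longleftrightarrow> (\<exists>s. subseq s x \<and> order_iso s y)"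

definition avoids :: "nat list \<Rightarrow> nat list \<Rightarrow> bool" where
  "avoids x y \<longleftrightarrow> \<not> contains x y"

definition Av :: "nat \<Rightarrow> nat list list \<Rightarrow> nat list set" where
  "Av n ys = {x. is_perm n x \<and> (\<forall>y\<in>set ys. avoids x y)}"

text \<open>w^i: insert m+1 immediately before w_i (1-based i, 1 \<le> i \<le> m+1).\<close>
definition ins_max :: "nat list \<Rightarrow> nat \<Rightarrow> nat list" where
  "ins_max w i = take (i - 1) w @ [length w + 1] @ drop (i - 1) w"

definition active_sites :: "nat list \<Rightarrow> nat list \<Rightarrow> nat set" where
  "active_sites w y = {i \<in> {1..length w + 1}. avoids (ins_max w i) y}"

definition small :: "nat \<Rightarrow> nat list \<Rightarrow> nat list" where
  "small k x = filter (\<lambda>v. v \<le> k) x"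

definition Act :: "nat \<Rightarrow> nat list \<Rightarrow> nat list \<Rightarrow> nat set" where
  "Act j x y = active_sites (small (length x + 1 - j) x) y"

definition signature :: "nat list \<Rightarrow> nat list \<Rightarrow> nat list" where
  "signature x y = map (\<lambda>j. card (Act j x y)) [1..<length x]"

definition west :: "nat list \<Rightarrow> nat list" where
  "west x = (THE x'. x' \<in> Av (length x) [[1,3,2]] \<and>
                     signature x' [1,3,2] = signature x [1,2,3])"

text \<open>Occurrences of 132* and 123* (paper's indices a<b<n, 1-based; here 0-based).\<close>
definition has_132star :: "nat list \<Rightarrow> bool" where
  "has_132star x \<longleftrightarrow> (\<exists>a b. a < b \<and> b + 1 < length x \<and>
       x!a < x!(b+1) \<and> x!b = x!(b+1) + 1)"

definition has_123star :: "nat list \<Rightarrow> bool" where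
  "has_123star x \<longleftrightarrow> (\<exists>a b. a < b \<and> b + 1 < length x \<and>
       x!a < x!b \<and> x!(b+1) = x!b + 1)"

end

theory Submission
  imports Defs
begin

(* Both Av(123) and Av(132) are generated by inserting a new maximum into an active site, and in
   both generating trees a node with k active sites has children with 2, 3, ..., k + 1 active
   sites, each exactly once.  Hence a permutation is determined by its signature, the two sets of
   signatures coincide, and West's bijection is well defined.  Both statistics in question can be
   read off the labels: the first entry is the maximum exactly when the label grows by one, and
   a new 132* (in a 123-avoider) or 123* (in a 132-avoider) occurrence is created exactly when the
   label stays the same below a node whose first entry is not its maximum.  Induction along the
   signature then shows that West's bijection transports 132* to 123*. *)

lemma is_perm_length: "is_perm n x \<Longrightarrow> length x = n"
  unfolding is_perm_def by (metis card_atLeastAtMost diff_Suc_1 distinct_card)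

lemma is_perm_nth_bounds: "is_perm n x \<Longrightarrow> t < n \<Longrightarrow> 1 \<le> x!t \<and> x!t \<le> n"
  by (metis atLeastAtMost_iff is_perm_def nth_mem is_perm_length)

lemma is_perm_nth_eq_iff: "is_perm n x \<Longrightarrow> s < n \<Longrightarrow> t < n \<Longrightarrow> x!s = x!t \<longleftrightarrow> s = t"
  by (metis is_perm_def nth_eq_iff_index_eq is_perm_length)

lemma is_perm_nth_less_max: "is_perm n x \<Longrightarrow> s < n \<Longrightarrow> t < n \<Longrightarrow> x!t = n \<Longrightarrow> s \<noteq> t \<Longrightarrow> x!s < n"
  using is_perm_nth_bounds is_perm_nth_eq_iff by (metis le_neq_implies_less)

lemma is_perm_obtain_max:
  assumes "is_perm n x" "1 \<le> n"
  obtains q where "q < n" "x!q = n"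
  using assms is_perm_length unfolding is_perm_def
  by (metis atLeastAtMost_iff in_set_conv_nth order_refl)

lemma is_perm_le_1_iff: "n \<le> 1 \<Longrightarrow> is_perm n x \<longleftrightarrow> x = [1..<Suc n]"
proof -
  assume "n \<le> 1"
  then consider "n = 0" | "n = 1" by linarith
  then show ?thesis
  proof cases
    case 1
    then show ?thesis unfolding is_perm_def by auto
  next
    case 2
    show ?thesis
    proof
      assume x: "is_perm n x"
      then obtain v where "x = [v]"
        using 2 is_perm_length by (metis One_nat_def length_0_conv length_Suc_conv)
      then show "x = [1..<Suc n]" using x 2 unfolding is_perm_def by auto
    qed (use 2 in \<open>simp add: is_perm_def\<close>)
  qed
qed

lemma small_is_perm: "is_perm n x \<Longrightarrow> k \<le> n \<Longrightarrow> is_perm k (small k x)"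
  unfolding is_perm_def small_def by auto

lemma small_small: "k \<le> l \<Longrightarrow> small k (small l x) = small k x"
  unfolding small_def by (auto intro: filter_cong)

lemma small_eq_self: "is_perm n x \<Longrightarrow> small n x = x"
  unfolding is_perm_def small_def by (auto simp: filter_id_conv)

lemma length_ins_max: "length (ins_max w i) = length w + 1"
  unfolding ins_max_def by simp

lemma nth_ins_max: "1 \<le> i \<Longrightarrow> i \<le> length w + 1 \<Longrightarrow> t \<le> length w \<Longrightarrow>
  ins_max w i ! t = (if t < i-1 then w!t else if t = i-1 then length w + 1 else w!(t-1))"
  unfolding ins_max_def by (auto simp: nth_append min_def)

lemma is_perm_ins_max:
  assumes "is_perm m w" "1 \<le> i" "i \<le> m + 1"
  shows "is_perm (m + 1) (ins_max w i)"
proof -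
  have "m + 1 \<notin> set w" using assms(1) unfolding is_perm_def by auto
  then have "m + 1 \<notin> set (take (i-1) w)" "m + 1 \<notin> set (drop (i-1) w)"
    by (meson in_set_takeD in_set_dropD)+
  moreover have "set (take (i-1) w) \<inter> set (drop (i-1) w) = {}"
    using assms(1) is_perm_def set_take_disj_set_drop_if_distinct by blast
  moreover have "set (take (i-1) w) \<union> set (drop (i-1) w) = set w"
    by (metis append_take_drop_id set_append)
  ultimately show ?thesis
    using assms(1) unfolding is_perm_def ins_max_def is_perm_length[OF assms(1)] by auto
qed

lemma small_ins_max: "is_perm m w \<Longrightarrow> small m (ins_max w i) = w"
proof -
  assume w: "is_perm m w"
  have "small m (ins_max w i) = small m (take (i-1) w) @ small m (drop (i-1) w)"
    unfolding ins_max_def small_def using is_perm_length[OF w] by simp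
  also have "\<dots> = small m w"
    unfolding small_def by (metis append_take_drop_id filter_append)
  finally show ?thesis using small_eq_self[OF w] by simp
qed

lemma ins_max_small:
  assumes "is_perm n x" "1 \<le> n"
  obtains i where "1 \<le> i" "i \<le> n" "x = ins_max (small (n-1) x) i"
proof -
  obtain q where q: "q < n" "x!q = n" using is_perm_obtain_max assms by blast
  have len: "length x = n" using assms(1) is_perm_length by blast
  have x: "x = take q x @ n # drop (Suc q) x" using q len by (metis id_take_nth_drop)
  have "distinct x" "set x = {1..n}" using assms(1) unfolding is_perm_def by auto
  then have "n \<notin> set (take q x @ drop (Suc q) x)" "set (take q x @ drop (Suc q) x) \<subseteq> {1..n}"
    by (subst (asm) (1 2) x; auto)+
  then have "\<forall>v\<in>set (take q x @ drop (Suc q) x). v \<le> n - 1"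
    by (metis atLeastAtMost_iff le_neq_implies_less less_Suc_eq_le Suc_pred' assms(2) subsetD
        less_one not_less0 order_less_le_trans)
  then have "small (n-1) x = take q x @ drop (Suc q) x"
    using assms(2) unfolding small_def by (subst x) (simp add: filter_id_conv)
  then have "ins_max (small (n-1) x) (q+1) = x"
    unfolding ins_max_def using q len x by (simp add: min_def)
  then show ?thesis using q by (intro that[of "q+1"]) auto
qed


lemma Av_singleton_iff: "x \<in> Av n [y] \<longleftrightarrow> is_perm n x \<and> avoids x y"
  unfolding Av_def by simp

lemma length_le_if_contains: "contains x y \<Longrightarrow> length y \<le> length x"
  unfolding contains_def order_iso_def by (metis list_emb_length)

lemma avoids_if_shorter: "length x < length y \<Longrightarrow> avoids x y"
  unfolding avoids_def using length_le_if_contains by fastforce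

lemma contains_if_contains_small: "contains (small k x) y \<Longrightarrow> contains x y"
  unfolding contains_def small_def using subseq_order.trans[OF _ subseq_filter_left] by blast

lemma subseq_drop_mono: "subseq s (drop j x) \<Longrightarrow> i \<le> j \<Longrightarrow> subseq s (drop i x)"
  by (metis append_take_drop_id drop_drop le_add_diff_inverse2 subseq_drop_many)

lemma subseq_nth_Cons_drop: "subseq s (drop (Suc i) x) \<Longrightarrow> i < length x \<Longrightarrow> subseq (x!i # s) (drop i x)"
  by (simp add: Cons_nth_drop_Suc[symmetric])

lemma subseq_nth3: "i < j \<Longrightarrow> j < k \<Longrightarrow> k < length x \<Longrightarrow> subseq [x!i, x!j, x!k] x"
  by (metis drop0 subseq_drop_mono subseq_nth_Cons_drop list_emb_Nil Suc_leI le0 order.strict_trans)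

lemma subseq3_obtain_nth:
  assumes "subseq [a, b, c] x"
  obtains i j k where "i < j" "j < k" "k < length x" "x!i = a" "x!j = b" "x!k = c"
proof -
  obtain us1 vs1 where 1: "x = us1 @ a # vs1" "subseq [b, c] vs1"
    using list_emb_ConsD[OF assms] by auto
  obtain us2 vs2 where 2: "vs1 = us2 @ b # vs2" "subseq [c] vs2"
    using list_emb_ConsD[OF 1(2)] by auto
  obtain us3 vs3 where 3: "vs2 = us3 @ c # vs3" using list_emb_ConsD[OF 2(2)] by auto
  show ?thesis
    by (rule that[of "length us1" "length us1 + 1 + length us2"
          "length us1 + 1 + length us2 + 1 + length us3"]) (use 1 2 3 in \<open>auto simp: nth_append\<close>)
qed

lemma contains_length3_iff:
  assumes "length y = 3"
  shows "contains x y \<longleftrightarrow> (\<exists>i j k. i < j \<and> j < k \<and> k < length x \<and> order_iso [x!i, x!j, x!k] y)"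
proof
  assume "contains x y"
  then obtain s where s: "subseq s x" "order_iso s y" unfolding contains_def by auto
  then have "length s = 3" using assms unfolding order_iso_def by simp
  then obtain a b c where "s = [a, b, c]" by (auto simp: numeral_3_eq_3 length_Suc_conv)
  then show "\<exists>i j k. i < j \<and> j < k \<and> k < length x \<and> order_iso [x!i, x!j, x!k] y"
    using s by (metis subseq3_obtain_nth)
qed (auto simp: contains_def intro: subseq_nth3)

lemma order_iso_123_iff [simp]: "order_iso [a, b, c] [1, 2, 3] \<longleftrightarrow> a < b \<and> b < c"
  unfolding order_iso_def by (auto simp: numeral_3_eq_3 less_Suc_eq)

lemma order_iso_132_iff [simp]: "order_iso [a, b, c] [1, 3, 2] \<longleftrightarrow> a < c \<and> c < b"
  unfolding order_iso_def by (auto simp: numeral_3_eq_3 less_Suc_eq)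

lemma contains_123_iff:
  "contains x [1, 2, 3] \<longleftrightarrow> (\<exists>i j k. i < j \<and> j < k \<and> k < length x \<and> x!i < x!j \<and> x!j < x!k)"
  by (subst contains_length3_iff) (auto simp del: One_nat_def)

lemma contains_132_iff:
  "contains x [1, 3, 2] \<longleftrightarrow> (\<exists>i j k. i < j \<and> j < k \<and> k < length x \<and> x!i < x!k \<and> x!k < x!j)"
  by (subst contains_length3_iff) (auto simp del: One_nat_def)

section \<open>Generating trees and signatures\<close>

abbreviation label :: "nat list \<Rightarrow> nat list \<Rightarrow> nat" where
  "label w y \<equiv> card (active_sites w y)"

lemma finite_active_sites: "finite (active_sites w y)"
  unfolding active_sites_def by simp

lemma active_sites_bounds: "i \<in> active_sites w y \<Longrightarrow> 1 \<le> i \<and> i \<le> length w + 1"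
  unfolding active_sites_def by simp

lemma active_sites_singleton: "3 \<le> length y \<Longrightarrow> active_sites [1] y = {1, 2}"
  unfolding active_sites_def using avoids_if_shorter[of "ins_max [1] _" y]
  by (auto simp: length_ins_max)

lemma ins_max_in_Av: "w \<in> Av m [y] \<Longrightarrow> i \<in> active_sites w y \<Longrightarrow> ins_max w i \<in> Av (m + 1) [y]"
  unfolding Av_singleton_iff active_sites_def using is_perm_ins_max is_perm_length by auto

lemma Av_obtain_ins_max:
  assumes "x \<in> Av n [y]" "1 \<le> n"
  obtains w i where "w \<in> Av (n-1) [y]" "i \<in> active_sites w y" "x = ins_max w i"
proof -
  have x: "is_perm n x" "avoids x y" using assms(1) Av_singleton_iff by auto
  obtain i where i: "1 \<le> i" "i \<le> n" "x = ins_max (small (n-1) x) i"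
    using ins_max_small[OF x(1) assms(2)] .
  have w: "is_perm (n-1) (small (n-1) x)" using small_is_perm[OF x(1)] by simp
  moreover have "avoids (small (n-1) x) y"
    using x(2) contains_if_contains_small unfolding avoids_def by blast
  moreover have "i \<in> active_sites (small (n-1) x) y"
    unfolding active_sites_def using i x(2) is_perm_length[OF w] assms(2) by auto
  ultimately show ?thesis using that i(3) Av_singleton_iff by blast
qed

lemma signature_short: "length x \<le> 1 \<Longrightarrow> signature x y = []"
  unfolding signature_def by simp

lemma signature_eq_Cons:
  assumes "is_perm n x" "2 \<le> n"
  shows "signature x y = label x y # signature (small (n-1) x) y"
proof -
  have len: "length x = n" "length (small (n-1) x) = n - 1"
    using assms is_perm_length small_is_perm by auto
  have "[1..<n] = 1 # map Suc [1..<n-1]"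
    using assms(2) by (simp add: map_Suc_upt upt_conv_Cons)
  moreover have "Act 1 x y = active_sites x y"
    unfolding Act_def using small_eq_self assms(1) len by simp
  moreover have "map (\<lambda>j. card (Act (Suc j) x y)) [1..<n-1] = signature (small (n-1) x) y"
    unfolding signature_def len Act_def
    by (rule map_cong) (use small_small[of _ "n - 1" x] len in auto)
  ultimately show ?thesis unfolding signature_def len by simp
qed

lemma signature_ins_max:
  assumes "w \<in> Av m [y]" "1 \<le> m" "i \<in> active_sites w y"
  shows "signature (ins_max w i) y = label (ins_max w i) y # signature w y"
proof -
  have "is_perm m w" using assms(1) Av_singleton_iff by blast
  moreover have "1 \<le> i" "i \<le> m + 1"
    using active_sites_bounds[OF assms(3)] is_perm_length[OF \<open>is_perm m w\<close>] by auto
  ultimately show ?thesis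
    using signature_eq_Cons[OF is_perm_ins_max] assms(2) small_ins_max by simp
qed

text \<open>The succession rule \<open>(k) \<leadsto> (2)(3)\<dots>(k+1)\<close> of the generating tree of \<open>Av(y)\<close>,
  whose nodes are labelled by their number of children.\<close>

definition catalan_rule :: "nat list \<Rightarrow> bool" where
  "catalan_rule y \<longleftrightarrow> (\<forall>m w. 1 \<le> m \<longrightarrow> w \<in> Av m [y] \<longrightarrow>
     bij_betw (\<lambda>i. label (ins_max w i) y) (active_sites w y) {2..label w y + 1})"

lemma bij_betw_if_inj_on_card_eq:
  assumes "inj_on f A" "f ` A \<subseteq> B" "finite B" "card A = card B"
  shows "bij_betw f A B"
  using assms card_image card_subset_eq by (metis bij_betw_imageI)

lemma catalan_ruleI:
  assumes "\<And>m w. 1 \<le> m \<Longrightarrow> w \<in> Av m [y] \<Longrightarrow> inj_on (\<lambda>i. label (ins_max w i) y) (active_sites w y)"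
    and "\<And>m w i. 1 \<le> m \<Longrightarrow> w \<in> Av m [y] \<Longrightarrow> i \<in> active_sites w y \<Longrightarrow>
           label (ins_max w i) y \<in> {2..label w y + 1}"
  shows "catalan_rule y"
  unfolding catalan_rule_def using assms by (auto intro!: bij_betw_if_inj_on_card_eq)

lemma catalan_ruleD:
  "catalan_rule y \<Longrightarrow> 1 \<le> m \<Longrightarrow> w \<in> Av m [y] \<Longrightarrow>
     bij_betw (\<lambda>i. label (ins_max w i) y) (active_sites w y) {2..label w y + 1}"
  unfolding catalan_rule_def by blast

lemma inj_on_signature:
  assumes "catalan_rule y"
  shows "inj_on (\<lambda>x. signature x y) (Av n [y])"
proof (induction n)
  case 0
  then show ?case using is_perm_le_1_iff by (auto simp: inj_on_def Av_singleton_iff)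
next
  case (Suc n)
  show ?case
  proof (rule inj_onI)
    fix x1 x2
    assume x: "x1 \<in> Av (Suc n) [y]" "x2 \<in> Av (Suc n) [y]" "signature x1 y = signature x2 y"
    show "x1 = x2"
    proof (cases "n = 0")
      case True
      then show ?thesis using x is_perm_le_1_iff by (auto simp: Av_singleton_iff)
    next
      case False
      obtain w1 i1 where 1: "w1 \<in> Av n [y]" "i1 \<in> active_sites w1 y" "x1 = ins_max w1 i1"
        using Av_obtain_ins_max[OF x(1)] by auto
      obtain w2 i2 where 2: "w2 \<in> Av n [y]" "i2 \<in> active_sites w2 y" "x2 = ins_max w2 i2"
        using Av_obtain_ins_max[OF x(2)] by auto
      have "signature x1 y = label x1 y # signature w1 y" "signature x2 y = label x2 y # signature w2 y"
        using signature_ins_max[OF 1(1) _ 1(2)] signature_ins_max[OF 2(1) _ 2(2)] 1(3) 2(3) False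
        by auto
      then have "label x1 y = label x2 y" "signature w1 y = signature w2 y"
        using x(3) by auto
      then have "w1 = w2" "label (ins_max w1 i1) y = label (ins_max w1 i2) y"
        using Suc.IH 1 2 by (auto dest: inj_onD)
      moreover have "inj_on (\<lambda>i. label (ins_max w1 i) y) (active_sites w1 y)"
        using catalan_ruleD[OF assms _ 1(1)] False by (simp add: bij_betw_imp_inj_on)
      ultimately show ?thesis using 1 2 by (metis inj_onD)
    qed
  qed
qed

lemma Av_le_1:
  assumes "n \<le> 1" "2 \<le> length y"
  shows "Av n [y] = {[1..<Suc n]}"
proof -
  have "length [1..<Suc n] < length y" using assms by (simp del: upt_Suc)
  then have "avoids [1..<Suc n] y" by (rule avoids_if_shorter)
  then show ?thesis
    by (auto simp: Av_singleton_iff is_perm_le_1_iff[OF assms(1)] simp del: upt_Suc)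
qed

lemma label_eq_if_signature_eq:
  assumes "x \<in> Av n [y]" "x' \<in> Av n [y']" "1 \<le> n" "3 \<le> length y" "3 \<le> length y'"
    and "signature x y = signature x' y'"
  shows "label x y = label x' y'"
proof (cases "n = 1")
  case True
  then have "x = [1]" "x' = [1]" using assms(1,2) is_perm_le_1_iff by (auto simp: Av_singleton_iff)
  then show ?thesis using active_sites_singleton assms(4,5) by simp
next
  case False
  then show ?thesis
    using assms signature_eq_Cons[of n x y] signature_eq_Cons[of n x' y']
    by (simp add: Av_singleton_iff)
qed

lemma signature_image_subset:
  assumes "catalan_rule y" "catalan_rule y'" "3 \<le> length y" "3 \<le> length y'"
  shows "(\<lambda>x. signature x y) ` Av n [y] \<subseteq> (\<lambda>x'. signature x' y') ` Av n [y']"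
proof (induction n)
  case 0
  then show ?case using Av_le_1 assms(3,4) by (simp add: signature_short)
next
  case (Suc n)
  show ?case
  proof (rule image_subsetI)
    fix x assume x: "x \<in> Av (Suc n) [y]"
    show "signature x y \<in> (\<lambda>x'. signature x' y') ` Av (Suc n) [y']"
    proof (cases "n = 0")
      case True
      then show ?thesis using x Av_le_1[of "Suc n"] assms(3,4) by (simp add: signature_short)
    next
      case False
      obtain w i where w: "w \<in> Av n [y]" "i \<in> active_sites w y" "x = ins_max w i"
        using Av_obtain_ins_max[OF x] by auto
      have "signature w y \<in> (\<lambda>x'. signature x' y') ` Av n [y']" using Suc.IH w(1) by blast
      then obtain w' where w': "w' \<in> Av n [y']" "signature w' y' = signature w y" by auto
      have "label w' y' = label w y"
        using label_eq_if_signature_eq[OF w'(1) w(1)] False assms(3,4) w'(2) by simp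
      moreover have "label x y \<in> {2..label w y + 1}"
        using bij_betw_apply[OF catalan_ruleD[OF assms(1) _ w(1)] w(2)] w(3) False by simp
      moreover have "(\<lambda>i'. label (ins_max w' i') y') ` active_sites w' y' = {2..label w' y' + 1}"
        using bij_betw_imp_surj_on[OF catalan_ruleD[OF assms(2) _ w'(1)]] False by simp
      ultimately have "label x y \<in> (\<lambda>i'. label (ins_max w' i') y') ` active_sites w' y'" by simp
      then obtain i' where i': "i' \<in> active_sites w' y'" "label (ins_max w' i') y' = label x y"
        by auto
      have "signature (ins_max w' i') y' = signature x y"
        using signature_ins_max[OF w'(1) _ i'(1)] signature_ins_max[OF w(1) _ w(2)]
          w(3) w'(2) i'(2) False
        by simp
      moreover have "ins_max w' i' \<in> Av (Suc n) [y']" using ins_max_in_Av[OF w'(1) i'(1)] by simp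
      ultimately show ?thesis by (metis image_eqI)
    qed
  qed
qed

section \<open>Inserting the maximum at a fixed site\<close>

definition maxfirst :: "nat list \<Rightarrow> bool" where
  "maxfirst x \<longleftrightarrow> x \<noteq> [] \<and> x!0 = length x"

definition ascent_before :: "nat list \<Rightarrow> nat \<Rightarrow> bool" where
  "ascent_before w s \<longleftrightarrow> (\<exists>a b. a < b \<and> b < s \<and> w!a < w!b)"

definition ascent_across :: "nat list \<Rightarrow> nat \<Rightarrow> bool" where
  "ascent_across w s \<longleftrightarrow> (\<exists>a c. a < s \<and> s \<le> c \<and> c < length w \<and> w!a < w!c)"

lemma maxfirst_iff: "is_perm m w \<Longrightarrow> 1 \<le> m \<Longrightarrow> maxfirst w \<longleftrightarrow> w!0 = m"
  unfolding maxfirst_def using is_perm_length by fastforce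

text \<open>In \<open>z = w\<^sup>i\<close> the new maximum \<open>m + 1\<close> sits at the 0-based position \<open>p = i - 1\<close>.\<close>

locale max_insertion =
  fixes m :: nat and w :: "nat list" and i :: nat
  assumes perm: "is_perm m w" and site: "1 \<le> i" "i \<le> m + 1"
begin

abbreviation z :: "nat list" where "z \<equiv> ins_max w i"
abbreviation p :: nat where "p \<equiv> i - 1"

lemma length_w: "length w = m"
  using is_perm_length perm by simp

lemma length_z: "length z = m + 1"
  using length_ins_max length_w by simp

lemma nth_z_before: "t < p \<Longrightarrow> z!t = w!t"
  using nth_ins_max[of i w t] site length_w by auto

lemma nth_z_at: "z!p = m + 1"
  using nth_ins_max[of i w p] site length_w by auto

lemma nth_z_after: "p < t \<Longrightarrow> t \<le> m \<Longrightarrow> z!t = w!(t - 1)"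
  using nth_ins_max[of i w t] site length_w by auto

lemma nth_w_le: "t < m \<Longrightarrow> w!t \<le> m"
  using is_perm_nth_bounds perm by blast

lemma nth_z_le: "t \<le> m \<Longrightarrow> t \<noteq> p \<Longrightarrow> z!t \<le> m"
  using nth_z_before nth_z_after nth_w_le site by (cases "t < p") auto

lemma nth_z_le_Suc: "t \<le> m \<Longrightarrow> z!t \<le> m + 1"
  using nth_z_le[of t] nth_z_at by (cases "t = p") auto

lemma nth_z_remove: "t \<le> m \<Longrightarrow> t \<noteq> p \<Longrightarrow> z!t = w!(if t < p then t else t - 1)"
  using nth_z_before nth_z_after by auto

lemma nth_z_shift: "t < m \<Longrightarrow> z!(if t < p then t else t + 1) = w!t"
  using nth_z_before nth_z_after[of "t + 1"] by auto

lemma contains_z_if_contains_w: "contains w y \<Longrightarrow> contains z y"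
  using contains_if_contains_small small_ins_max[OF perm] by metis

lemma contains_123_ins_imp:
  assumes "contains z [1,2,3]"
  shows "contains w [1,2,3] \<or> ascent_before w p"
proof -
  from assms obtain a b c where abc: "a < b" "b < c" "c \<le> m" "z!a < z!b" "z!b < z!c"
    unfolding contains_123_iff length_z by auto
  have "b \<noteq> p"
  proof
    assume "b = p"
    then have "z!c \<le> m" using nth_z_le abc by simp
    then show False using abc nth_z_at \<open>b = p\<close> by simp
  qed
  have "a \<noteq> p"
  proof
    assume "a = p"
    have "z!b \<le> m" using nth_z_le abc \<open>b \<noteq> p\<close> by simp
    then show False using abc nth_z_at \<open>a = p\<close> by simp
  qed
  show ?thesis
  proof (cases "c = p")
    case True
    then have "ascent_before w p"
      unfolding ascent_before_def using abc nth_z_before by (metis order.strict_trans)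
    then show ?thesis ..
  next
    case False
    let ?d = "\<lambda>t. if t < p then t else t - 1"
    have "?d a < ?d b" "?d b < ?d c" "?d c < length w"
      using abc \<open>a \<noteq> p\<close> \<open>b \<noteq> p\<close> False site length_w by auto
    moreover have "z!a = w!(?d a)" "z!b = w!(?d b)" "z!c = w!(?d c)"
      using nth_z_remove abc \<open>a \<noteq> p\<close> \<open>b \<noteq> p\<close> False by auto
    ultimately have "contains w [1,2,3]" unfolding contains_123_iff using abc by metis
    then show ?thesis ..
  qed
qed

lemma contains_123_ins_iff: "contains z [1,2,3] \<longleftrightarrow> contains w [1,2,3] \<or> ascent_before w p"
proof
  assume "contains w [1,2,3] \<or> ascent_before w p"
  then show "contains z [1,2,3]"
  proof
    assume "ascent_before w p"
    then obtain a b where ab: "a < b" "b < p" "w!a < w!b" unfolding ascent_before_def by auto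
    moreover have "w!b \<le> m" using nth_w_le ab site by simp
    ultimately have "z!a < z!b" "z!b < z!p" using nth_z_before nth_z_at by auto
    then show ?thesis unfolding contains_123_iff length_z
      using ab site by (intro exI[of _ a] exI[of _ b] exI[of _ p]) auto
  qed (rule contains_z_if_contains_w)
qed (rule contains_123_ins_imp)

lemma contains_132_ins_imp:
  assumes "contains z [1,3,2]"
  shows "contains w [1,3,2] \<or> ascent_across w p"
proof -
  from assms obtain a b c where abc: "a < b" "b < c" "c \<le> m" "z!a < z!c" "z!c < z!b"
    unfolding contains_132_iff length_z by auto
  have "c \<noteq> p"
  proof
    assume "c = p"
    then have "z!b \<le> m" using nth_z_le abc by simp
    then show False using abc nth_z_at \<open>c = p\<close> by simp
  qed
  have "a \<noteq> p"
  proof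
    assume "a = p"
    have "z!c \<le> m" using nth_z_le abc \<open>c \<noteq> p\<close> by simp
    then show False using abc nth_z_at \<open>a = p\<close> by simp
  qed
  show ?thesis
  proof (cases "b = p")
    case True
    then have "z!a = w!a" "z!c = w!(c - 1)" using nth_z_before nth_z_after abc True by auto
    then have "ascent_across w p"
      unfolding ascent_across_def length_w using abc True by (intro exI[of _ a] exI[of _ "c - 1"]) auto
    then show ?thesis ..
  next
    case False
    let ?d = "\<lambda>t. if t < p then t else t - 1"
    have "?d a < ?d b" "?d b < ?d c" "?d c < length w"
      using abc \<open>a \<noteq> p\<close> \<open>c \<noteq> p\<close> False site length_w by auto
    moreover have "z!a = w!(?d a)" "z!b = w!(?d b)" "z!c = w!(?d c)"
      using nth_z_remove abc \<open>a \<noteq> p\<close> \<open>c \<noteq> p\<close> False by auto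
    ultimately have "contains w [1,3,2]" unfolding contains_132_iff using abc by metis
    then show ?thesis ..
  qed
qed

lemma contains_132_ins_iff: "contains z [1,3,2] \<longleftrightarrow> contains w [1,3,2] \<or> ascent_across w p"
proof
  assume "contains w [1,3,2] \<or> ascent_across w p"
  then show "contains z [1,3,2]"
  proof
    assume "ascent_across w p"
    then obtain a c where ac: "a < p" "p \<le> c" "c < m" "w!a < w!c"
      unfolding ascent_across_def length_w by auto
    moreover have "z!(c + 1) = w!c" "w!c \<le> m" using nth_z_after[of "c + 1"] nth_w_le ac by auto
    ultimately have "z!a < z!(c + 1)" "z!(c + 1) < z!p" using nth_z_before nth_z_at by auto
    then show ?thesis unfolding contains_132_iff length_z
      using ac site by (intro exI[of _ a] exI[of _ p] exI[of _ "c + 1"]) auto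
  qed (rule contains_z_if_contains_w)
qed (rule contains_132_ins_imp)

lemma maxfirst_ins_iff:
  assumes "1 \<le> m"
  shows "maxfirst z \<longleftrightarrow> i = 1"
proof -
  have "maxfirst z \<longleftrightarrow> z!0 = m + 1" using maxfirst_iff[OF is_perm_ins_max[OF perm site]] by simp
  moreover have "z!0 \<le> m" if "i \<noteq> 1" using nth_z_before[of 0] nth_w_le[of 0] that site assms by simp
  ultimately show ?thesis using nth_z_at by (cases "i = 1") auto
qed

lemma ascent_before_ins_below:
  assumes "s \<le> p"
  shows "ascent_before z s \<longleftrightarrow> ascent_before w s"
proof -
  have "z!a < z!b \<longleftrightarrow> w!a < w!b" if "a < b" "b < s" for a b using nth_z_before that assms by auto
  then show ?thesis unfolding ascent_before_def by blast
qed

lemma ascent_before_ins_above: "1 \<le> p \<Longrightarrow> p < s \<Longrightarrow> ascent_before z s"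
proof -
  assume p: "1 \<le> p" "p < s"
  have "z!(p - 1) = w!(p - 1)" "w!(p - 1) \<le> m" using nth_z_before nth_w_le p site by auto
  then have "z!(p - 1) < z!p" using nth_z_at by simp
  then show ?thesis unfolding ascent_before_def using p by (intro exI[of _ "p - 1"] exI[of _ p]) auto
qed

lemma ascent_across_ins_below: "1 \<le> s \<Longrightarrow> s \<le> p \<Longrightarrow> ascent_across z s"
proof -
  assume s: "1 \<le> s" "s \<le> p"
  have "z!0 = w!0" "w!0 \<le> m" using nth_z_before nth_w_le s site by auto
  then have "z!0 < z!p" using nth_z_at by simp
  then show ?thesis unfolding ascent_across_def length_z using s site
    by (intro exI[of _ 0] exI[of _ p]) auto
qed

lemma ascent_across_ins_above:
  assumes "p < s"
  shows "ascent_across z s \<longleftrightarrow> ascent_across w (s - 1)"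
proof
  assume "ascent_across z s"
  then obtain a c where ac: "a < s" "s \<le> c" "c \<le> m" "z!a < z!c"
    unfolding ascent_across_def length_z by auto
  have zc: "z!c = w!(c - 1)" "w!(c - 1) \<le> m" using nth_z_after nth_w_le ac assms by auto
  then have "a \<noteq> p" using ac nth_z_at by auto
  let ?d = "if a < p then a else a - 1"
  have "z!a = w!?d" using nth_z_remove ac \<open>a \<noteq> p\<close> assms by auto
  then show "ascent_across w (s - 1)" unfolding ascent_across_def length_w
    using ac zc \<open>a \<noteq> p\<close> assms by (intro exI[of _ ?d] exI[of _ "c - 1"]) auto
next
  assume "ascent_across w (s - 1)"
  then obtain a c where ac: "a < s - 1" "s - 1 \<le> c" "c < m" "w!a < w!c"
    unfolding ascent_across_def length_w by auto
  let ?u = "if a < p then a else a + 1"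
  have "z!?u = w!a" "z!(c + 1) = w!c" using nth_z_shift[of a] nth_z_after[of "c + 1"] ac assms by auto
  then show "ascent_across z s" unfolding ascent_across_def length_z
    using ac assms by (intro exI[of _ ?u] exI[of _ "c + 1"]) auto
qed

lemma has_132star_ins_imp:
  assumes "has_132star z"
  shows "has_132star w \<or> (1 \<le> p \<and> p < m \<and> w!p = m)"
proof -
  obtain a b where ab: "a < b" "b + 1 \<le> m" "z!a < z!(b + 1)" "z!b = z!(b + 1) + 1"
    using assms unfolding has_132star_def length_z by auto
  have "b + 1 \<noteq> p" using nth_z_le_Suc[of b] nth_z_at ab by auto
  have "a \<noteq> p" using nth_z_le_Suc[of "b + 1"] nth_z_at ab by auto
  show ?thesis
  proof (cases "b = p")
    case True
    then show ?thesis using nth_z_after[of "b + 1"] nth_z_at ab by auto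
  next
    case False
    let ?d = "\<lambda>t. if t < p then t else t - 1"
    have "?d a < ?d b" "?d (b + 1) = ?d b + 1" "?d b + 1 < length w"
      using ab \<open>a \<noteq> p\<close> \<open>b + 1 \<noteq> p\<close> False site length_w by auto
    moreover have "z!a = w!(?d a)" "z!b = w!(?d b)" "z!(b + 1) = w!(?d (b + 1))"
      using nth_z_remove ab \<open>a \<noteq> p\<close> \<open>b + 1 \<noteq> p\<close> False by auto
    ultimately have "has_132star w"
      unfolding has_132star_def by (intro exI[of _ "?d a"] exI[of _ "?d b"]) (use ab in auto)
    then show ?thesis ..
  qed
qed

lemma has_132star_ins_iff:
  assumes "\<not> contains z [1,2,3]"
  shows "has_132star z \<longleftrightarrow> has_132star w \<or> (1 \<le> p \<and> p < m \<and> w!p = m)"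
proof
  assume "has_132star w \<or> (1 \<le> p \<and> p < m \<and> w!p = m)"
  then show "has_132star z"
  proof
    assume "has_132star w"
    then obtain a b where ab: "a < b" "b + 1 < m" "w!a < w!(b + 1)" "w!b = w!(b + 1) + 1"
      unfolding has_132star_def length_w by auto
    show ?thesis
    proof (cases "p = b + 1")
      case True
      \<comment> \<open>the insertion separates the adjacent pair, so \<open>w!a, w!b, m + 1\<close> form a 123\<close>
      have "w!b \<le> m" using nth_w_le[of b] ab by linarith
      then have "contains z [1,2,3]" unfolding contains_123_iff length_z
        using ab True nth_z_before nth_z_at by (intro exI[of _ a] exI[of _ b] exI[of _ p]) auto
      then show ?thesis using assms by simp
    next
      case False
      let ?u = "\<lambda>t. if t < p then t else t + 1"
      have "?u a < ?u b" "?u (b + 1) = ?u b + 1" "?u b + 1 < length z"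
        using ab False length_z by auto
      moreover have "z!(?u a) = w!a" "z!(?u b) = w!b" "z!(?u (b + 1)) = w!(b + 1)"
        using nth_z_shift[of a] nth_z_shift[of b] nth_z_shift[of "b + 1"] ab by auto
      ultimately show ?thesis
        unfolding has_132star_def by (intro exI[of _ "?u a"] exI[of _ "?u b"]) (use ab in auto)
    qed
  next
    assume max: "1 \<le> p \<and> p < m \<and> w!p = m"
    then have "w!0 < m" using is_perm_nth_less_max[OF perm, of 0 p] by auto
    moreover have "z!0 = w!0" "z!(p + 1) = m" using nth_z_before nth_z_after[of "p + 1"] max by auto
    ultimately show ?thesis
      unfolding has_132star_def length_z using max nth_z_at by (intro exI[of _ 0] exI[of _ p]) auto
  qed
qed (rule has_132star_ins_imp)

lemma has_123star_ins_imp: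
  assumes "has_123star z"
  shows "has_123star w \<or> (2 \<le> p \<and> w!(p - 1) = m)"
proof -
  obtain a b where ab: "a < b" "b + 1 \<le> m" "z!a < z!b" "z!(b + 1) = z!b + 1"
    using assms unfolding has_123star_def length_z by auto
  have "b \<noteq> p" using nth_z_le_Suc[of "b + 1"] nth_z_at ab by auto
  have "a \<noteq> p" using nth_z_le[of b] nth_z_at ab \<open>b \<noteq> p\<close> by auto
  show ?thesis
  proof (cases "b + 1 = p")
    case True
    then have "p - 1 = b" "2 \<le> p" using ab by auto
    moreover have "w!b = m" using nth_z_before[of b] nth_z_at ab True by auto
    ultimately show ?thesis by simp
  next
    case False
    let ?d = "\<lambda>t. if t < p then t else t - 1"
    have "?d a < ?d b" "?d (b + 1) = ?d b + 1" "?d b + 1 < length w"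
      using ab \<open>a \<noteq> p\<close> \<open>b \<noteq> p\<close> False site length_w by auto
    moreover have "z!a = w!(?d a)" "z!b = w!(?d b)" "z!(b + 1) = w!(?d (b + 1))"
      using nth_z_remove ab \<open>a \<noteq> p\<close> \<open>b \<noteq> p\<close> False by auto
    ultimately have "has_123star w"
      unfolding has_123star_def by (intro exI[of _ "?d a"] exI[of _ "?d b"]) (use ab in auto)
    then show ?thesis ..
  qed
qed

lemma has_123star_ins_iff:
  assumes "\<not> contains z [1,3,2]"
  shows "has_123star z \<longleftrightarrow> has_123star w \<or> (2 \<le> p \<and> w!(p - 1) = m)"
proof
  assume "has_123star w \<or> (2 \<le> p \<and> w!(p - 1) = m)"
  then show "has_123star z"
  proof
    assume "has_123star w"
    then obtain a b where ab: "a < b" "b + 1 < m" "w!a < w!b" "w!(b + 1) = w!b + 1"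
      unfolding has_123star_def length_w by auto
    show ?thesis
    proof (cases "p = b + 1")
      case True
      \<comment> \<open>the insertion separates the adjacent pair, so \<open>w!a, m + 1, w!(b + 1)\<close> form a 132\<close>
      have i: "i = b + 2" using True site by simp
      then have "z!(p + 1) = w!(b + 1)" using nth_z_after[of "p + 1"] ab by simp
      moreover have "w!(b + 1) \<le> m" using nth_w_le[of "b + 1"] ab by linarith
      ultimately have "contains z [1,3,2]" unfolding contains_132_iff length_z
        using ab i nth_z_before nth_z_at by (intro exI[of _ a] exI[of _ p] exI[of _ "p + 1"]) auto
      then show ?thesis using assms by simp
    next
      case False
      let ?u = "\<lambda>t. if t < p then t else t + 1"
      have "?u a < ?u b" "?u (b + 1) = ?u b + 1" "?u b + 1 < length z"
        using ab False length_z by auto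
      moreover have "z!(?u a) = w!a" "z!(?u b) = w!b" "z!(?u (b + 1)) = w!(b + 1)"
        using nth_z_shift[of a] nth_z_shift[of b] nth_z_shift[of "b + 1"] ab by auto
      ultimately show ?thesis
        unfolding has_123star_def by (intro exI[of _ "?u a"] exI[of _ "?u b"]) (use ab in auto)
    qed
  next
    assume max: "2 \<le> p \<and> w!(p - 1) = m"
    define q where "q = p - 1"
    have q: "p = q + 1" "1 \<le> q" "w!q = m" using max unfolding q_def by auto
    have "w!0 < m" using is_perm_nth_less_max[OF perm, of 0 q] q site by auto
    moreover have "z!0 = w!0" "z!q = m" "z!(q + 1) = m + 1" using nth_z_before nth_z_at q by auto
    ultimately show ?thesis unfolding has_123star_def length_z
      using q site by (intro exI[of _ 0] exI[of _ q]) auto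
  qed
qed (rule has_123star_ins_imp)

end

lemma max_insertion_active_site:
  assumes "w \<in> Av m [y]" "i \<in> active_sites w y"
  shows "max_insertion m w i"
  using assms active_sites_bounds[OF assms(2)]
  by unfold_locales (auto simp: Av_singleton_iff is_perm_length)

section \<open>The generating tree of Av(123)\<close>

lemma ascent_before_mono: "ascent_before w s \<Longrightarrow> s \<le> s' \<Longrightarrow> ascent_before w s'"
  unfolding ascent_before_def by (meson less_le_trans)

lemma ascent_before_Cons_max:
  assumes "\<forall>v\<in>set w. v < x" "s \<le> length w"
  shows "ascent_before (x # w) (Suc s) \<longleftrightarrow> ascent_before w s"
proof
  assume "ascent_before (x # w) (Suc s)"
  then obtain a b where ab: "a < b" "b < Suc s" "(x # w)!a < (x # w)!b"
    unfolding ascent_before_def by blast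
  then obtain a' b' where a'b': "a = Suc a'" "b = Suc b'"
  proof (cases a)
    case 0
    then have "w!(b - 1) \<in> set w" using ab assms(2) by simp
    moreover have "(x # w)!b = w!(b - 1)" using ab by (simp add: nth_Cons')
    ultimately show ?thesis using ab assms(1) 0 by auto
  next
    case (Suc a')
    then show ?thesis using that ab by (cases b) auto
  qed
  then show "ascent_before w s"
    unfolding ascent_before_def using ab by (intro exI[of _ a'] exI[of _ b']) auto
next
  assume "ascent_before w s"
  then obtain a b where "a < b" "b < s" "w!a < w!b" unfolding ascent_before_def by blast
  then show "ascent_before (x # w) (Suc s)"
    unfolding ascent_before_def by (intro exI[of _ "Suc a"] exI[of _ "Suc b"]) auto
qed

lemma active_sites_123:
  assumes "w \<in> Av m [[1,2,3]]"
  shows "active_sites w [1,2,3] = {i \<in> {1..m + 1}. \<not> ascent_before w (i - 1)}"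
proof -
  have w: "is_perm m w" "\<not> contains w [1,2,3]"
    using assms by (auto simp: Av_singleton_iff avoids_def)
  have "avoids (ins_max w i) [1,2,3] \<longleftrightarrow> \<not> ascent_before w (i - 1)" if "i \<in> {1..m + 1}" for i
  proof -
    interpret max_insertion m w i using w(1) that by unfold_locales auto
    show ?thesis using contains_123_ins_iff w(2) unfolding avoids_def by simp
  qed
  then show ?thesis unfolding active_sites_def using is_perm_length[OF w(1)] by auto
qed

lemma active_sites_123_le_label:
  assumes "w \<in> Av m [[1,2,3]]" "i \<in> active_sites w [1,2,3]"
  shows "i \<le> label w [1,2,3]"
proof -
  have "\<not> ascent_before w (i - 1)" "i \<le> m + 1" using assms active_sites_123 by auto
  have "{1..i} \<subseteq> active_sites w [1,2,3]"
  proof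
    fix t assume t: "t \<in> {1..i}"
    then have "t - 1 \<le> i - 1" by (simp add: diff_le_mono)
    then have "\<not> ascent_before w (t - 1)"
      using ascent_before_mono \<open>\<not> ascent_before w (i - 1)\<close> by blast
    then show "t \<in> active_sites w [1,2,3]"
      unfolding active_sites_123[OF assms(1)] using t \<open>i \<le> m + 1\<close> by auto
  qed
  then have "card {1..i} \<le> label w [1,2,3]" using card_mono[OF finite_active_sites] by blast
  then show ?thesis by simp
qed

lemma label_123_ins_first:
  assumes "w \<in> Av m [[1,2,3]]"
  shows "label (ins_max w 1) [1,2,3] = label w [1,2,3] + 1"
proof -
  have w: "is_perm m w" using assms Av_singleton_iff by blast
  have z: "ins_max w 1 = (m + 1) # w" unfolding ins_max_def using is_perm_length[OF w] by simp
  have max: "\<forall>v\<in>set w. v < m + 1" using w unfolding is_perm_def by auto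
  have "1 \<in> active_sites w [1,2,3]" using active_sites_123[OF assms] by (simp add: ascent_before_def)
  from active_sites_123[OF ins_max_in_Av[OF assms this]] have Az:
    "active_sites (ins_max w 1) [1,2,3] = {t \<in> {1..m + 2}. \<not> ascent_before ((m + 1) # w) (t - 1)}"
    unfolding z by simp
  have "t \<in> active_sites (ins_max w 1) [1,2,3] \<longleftrightarrow> t \<in> insert 1 (Suc ` active_sites w [1,2,3])" for t
  proof (cases "t \<le> 1")
    case True
    then show ?thesis unfolding Az by (auto simp: ascent_before_def)
  next
    case False
    define s where "s = t - 2"
    have t: "t = Suc (Suc s)" using False unfolding s_def by simp
    have "s \<le> m \<Longrightarrow> ascent_before ((m + 1) # w) (Suc s) \<longleftrightarrow> ascent_before w s"
      using ascent_before_Cons_max[OF max] is_perm_length[OF w] by simp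
    then show ?thesis unfolding Az active_sites_123[OF assms] t by auto
  qed
  then have "active_sites (ins_max w 1) [1,2,3] = insert 1 (Suc ` active_sites w [1,2,3])" by blast
  moreover have "1 \<notin> Suc ` active_sites w [1,2,3]" using active_sites_bounds by auto
  ultimately show ?thesis by (simp add: card_image finite_active_sites)
qed

lemma label_123_ins_later:
  assumes "w \<in> Av m [[1,2,3]]" "i \<in> active_sites w [1,2,3]" "2 \<le> i"
  shows "label (ins_max w i) [1,2,3] = i"
proof -
  have no_ascent: "\<not> ascent_before w (i - 1)" using assms(1,2) active_sites_123 by auto
  interpret max_insertion m w i using max_insertion_active_site[OF assms(1,2)] .
  have "active_sites z [1,2,3] = {t \<in> {1..m + 2}. \<not> ascent_before z (t - 1)}"
    using active_sites_123[OF ins_max_in_Av[OF assms(1,2)]] by simp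
  also have "\<dots> = {1..i}"
  proof (intro set_eqI iffI)
    fix t assume t: "t \<in> {t \<in> {1..m + 2}. \<not> ascent_before z (t - 1)}"
    show "t \<in> {1..i}"
    proof (rule ccontr)
      assume "t \<notin> {1..i}"
      then have "1 \<le> p" "p < t - 1" using t assms(3) by auto
      then show False using t ascent_before_ins_above by auto
    qed
  next
    fix t assume t: "t \<in> {1..i}"
    then have "t - 1 \<le> p" by (simp add: diff_le_mono)
    then have "\<not> ascent_before z (t - 1)"
      using ascent_before_ins_below ascent_before_mono no_ascent by blast
    then show "t \<in> {t \<in> {1..m + 2}. \<not> ascent_before z (t - 1)}" using t site by auto
  qed
  finally show ?thesis by simp
qed

lemma label_123_max_pos:
  assumes "w \<in> Av m [[1,2,3]]" "q < m" "w!q = m" "1 \<le> q"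
  shows "label w [1,2,3] = q + 1"
proof -
  have w: "is_perm m w" "\<not> contains w [1,2,3]"
    using assms(1) by (auto simp: Av_singleton_iff avoids_def)
  have "\<not> ascent_before w q"
  proof
    assume "ascent_before w q"
    then obtain a b where ab: "a < b" "b < q" "w!a < w!b" unfolding ascent_before_def by blast
    then have "w!b < w!q" using is_perm_nth_less_max[OF w(1), of b q] assms by simp
    then have "contains w [1,2,3]" unfolding contains_123_iff is_perm_length[OF w(1)]
      using ab assms(2) by (intro exI[of _ a] exI[of _ b] exI[of _ q]) auto
    then show False using w(2) by simp
  qed
  moreover have "ascent_before w s" if "q < s" for s
  proof -
    have "w!(q - 1) < w!q" using is_perm_nth_less_max[OF w(1), of "q - 1" q] assms by simp
    then show ?thesis unfolding ascent_before_def using that assms(4)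
      by (intro exI[of _ "q - 1"] exI[of _ q]) auto
  qed
  ultimately have "\<not> ascent_before w s \<longleftrightarrow> s \<le> q" for s
    using ascent_before_mono[of w s q] by (cases "s \<le> q") auto
  then have "active_sites w [1,2,3] = {t \<in> {1..m + 1}. t - 1 \<le> q}"
    unfolding active_sites_123[OF assms(1)] by simp
  also have "\<dots> = {1..q + 1}" using assms(2) by (auto simp: le_diff_conv)
  finally show ?thesis by simp
qed

lemma label_123_ins:
  assumes "w \<in> Av m [[1,2,3]]" "i \<in> active_sites w [1,2,3]"
  shows "label (ins_max w i) [1,2,3] = (if i = 1 then label w [1,2,3] + 1 else i)"
  using label_123_ins_first[OF assms(1)] label_123_ins_later[OF assms] active_sites_bounds[OF assms(2)]
  by auto

lemma catalan_rule_123: "catalan_rule [1,2,3]"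
proof (rule catalan_ruleI)
  fix m w assume w: "w \<in> Av m [[1,2,3]]"
  show "inj_on (\<lambda>i. label (ins_max w i) [1,2,3]) (active_sites w [1,2,3])"
  proof (rule inj_onI)
    fix i j assume i: "i \<in> active_sites w [1,2,3]" and j: "j \<in> active_sites w [1,2,3]"
      and eq: "label (ins_max w i) [1,2,3] = label (ins_max w j) [1,2,3]"
    show "i = j"
      using eq label_123_ins[OF w i] label_123_ins[OF w j]
        active_sites_123_le_label[OF w i] active_sites_123_le_label[OF w j]
      by (auto split: if_splits simp del: One_nat_def)
  qed
next
  fix m w i assume "1 \<le> m" and w: "w \<in> Av m [[1,2,3]]" and i: "i \<in> active_sites w [1,2,3]"
  have "1 \<in> active_sites w [1,2,3]" using active_sites_123[OF w] by (simp add: ascent_before_def)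
  then have "1 \<le> label w [1,2,3]" using active_sites_123_le_label[OF w] by blast
  then show "label (ins_max w i) [1,2,3] \<in> {2..label w [1,2,3] + 1}"
    using label_123_ins[OF w i] active_sites_123_le_label[OF w i] active_sites_bounds[OF i] by auto
qed

lemma label_123_ins_Suc_iff:
  assumes "w \<in> Av m [[1,2,3]]" "i \<in> active_sites w [1,2,3]"
  shows "label (ins_max w i) [1,2,3] = label w [1,2,3] + 1 \<longleftrightarrow> i = 1"
  using label_123_ins[OF assms] active_sites_123_le_label[OF assms] by auto

lemma label_123_ins_eq_iff:
  assumes "w \<in> Av m [[1,2,3]]" "1 \<le> m" "i \<in> active_sites w [1,2,3]"
  shows "\<not> maxfirst w \<and> label (ins_max w i) [1,2,3] = label w [1,2,3] \<longleftrightarrow>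
    1 \<le> i - 1 \<and> i - 1 < m \<and> w!(i - 1) = m"
proof -
  have w: "is_perm m w" using assms(1) Av_singleton_iff by blast
  obtain q where q: "q < m" "w!q = m" using is_perm_obtain_max[OF w assms(2)] .
  have "\<not> maxfirst w \<longleftrightarrow> 1 \<le> q"
    using maxfirst_iff[OF w assms(2)] is_perm_nth_eq_iff[OF w, of 0 q] q by auto
  moreover have "label w [1,2,3] = q + 1" if "1 \<le> q" using label_123_max_pos[OF assms(1) q that] .
  moreover have "w!(i - 1) = m \<longleftrightarrow> i - 1 = q" if "i - 1 < m"
    using is_perm_nth_eq_iff[OF w that q(1)] q(2) by simp
  ultimately show ?thesis using label_123_ins[OF assms(1,3)] q(1) by auto
qed

lemma maxfirst_ins_123:
  assumes "w \<in> Av m [[1,2,3]]" "1 \<le> m" "i \<in> active_sites w [1,2,3]"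
  shows "maxfirst (ins_max w i) \<longleftrightarrow> label (ins_max w i) [1,2,3] = label w [1,2,3] + 1"
proof -
  interpret max_insertion m w i using max_insertion_active_site[OF assms(1,3)] .
  show ?thesis using maxfirst_ins_iff[OF assms(2)] label_123_ins_Suc_iff[OF assms(1,3)] by simp
qed

lemma has_132star_ins_123:
  assumes "w \<in> Av m [[1,2,3]]" "1 \<le> m" "i \<in> active_sites w [1,2,3]"
  shows "has_132star (ins_max w i) \<longleftrightarrow>
    has_132star w \<or> (\<not> maxfirst w \<and> label (ins_max w i) [1,2,3] = label w [1,2,3])"
proof -
  interpret max_insertion m w i using max_insertion_active_site[OF assms(1,3)] .
  have "\<not> contains z [1,2,3]" using assms(3) unfolding active_sites_def avoids_def by simp
  then show ?thesis using has_132star_ins_iff label_123_ins_eq_iff[OF assms] by simp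
qed

section \<open>The generating tree of Av(132)\<close>

lemma active_sites_132:
  assumes "w \<in> Av m [[1,3,2]]"
  shows "active_sites w [1,3,2] = {i \<in> {1..m + 1}. \<not> ascent_across w (i - 1)}"
proof -
  have w: "is_perm m w" "\<not> contains w [1,3,2]"
    using assms by (auto simp: Av_singleton_iff avoids_def)
  have "avoids (ins_max w i) [1,3,2] \<longleftrightarrow> \<not> ascent_across w (i - 1)" if "i \<in> {1..m + 1}" for i
  proof -
    interpret max_insertion m w i using w(1) that by unfold_locales auto
    show ?thesis using contains_132_ins_iff w(2) unfolding avoids_def by simp
  qed
  then show ?thesis unfolding active_sites_def using is_perm_length[OF w(1)] by auto
qed

lemma one_in_active_sites_132: "w \<in> Av m [[1,3,2]] \<Longrightarrow> 1 \<in> active_sites w [1,3,2]"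
  using active_sites_132 by (simp add: ascent_across_def)

lemma active_sites_132_ins:
  assumes "w \<in> Av m [[1,3,2]]" "i \<in> active_sites w [1,3,2]"
  shows "active_sites (ins_max w i) [1,3,2] = insert 1 (Suc ` {j \<in> active_sites w [1,3,2]. i \<le> j})"
proof -
  interpret max_insertion m w i using max_insertion_active_site[OF assms] .
  have Az: "active_sites z [1,3,2] = {t \<in> {1..m + 2}. \<not> ascent_across z (t - 1)}"
    using active_sites_132[OF ins_max_in_Av[OF assms]] by simp
  have "t \<in> active_sites z [1,3,2] \<longleftrightarrow> t \<in> insert 1 (Suc ` {j \<in> active_sites w [1,3,2]. i \<le> j})" for t
  proof (cases "t \<le> 1")
    case True
    then show ?thesis unfolding Az using active_sites_bounds by (auto simp: ascent_across_def)
  next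
    case False
    then have "t \<in> Suc ` {j \<in> active_sites w [1,3,2]. i \<le> j} \<longleftrightarrow>
        t - 1 \<in> active_sites w [1,3,2] \<and> i \<le> t - 1"
      by (auto simp: image_iff intro: bexI[of _ "t - 1"])
    moreover have "ascent_across z (t - 1)" if "t \<le> i"
      using ascent_across_ins_below False that by simp
    moreover have "ascent_across z (t - 1) \<longleftrightarrow> ascent_across w (t - 1 - 1)" if "i < t"
      using ascent_across_ins_above[of "t - 1"] that site by simp
    ultimately show ?thesis unfolding Az active_sites_132[OF assms(1)] using False
      by (cases "t \<le> i") auto
  qed
  then show ?thesis by blast
qed

lemma label_132_ins:
  assumes "w \<in> Av m [[1,3,2]]" "i \<in> active_sites w [1,3,2]"
  shows "label (ins_max w i) [1,3,2] = card {j \<in> active_sites w [1,3,2]. i \<le> j} + 1"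
proof -
  have "1 \<notin> Suc ` {j \<in> active_sites w [1,3,2]. i \<le> j}" using active_sites_bounds by fastforce
  then show ?thesis
    unfolding active_sites_132_ins[OF assms] by (simp add: card_image finite_active_sites)
qed

lemma card_ge_strict_antimono:
  fixes A :: "'a::linorder set"
  assumes "finite A" "i \<in> A" "j \<in> A" "i < j"
  shows "card {t \<in> A. j \<le> t} < card {t \<in> A. i \<le> t}"
proof (rule psubset_card_mono)
  have "i \<in> {t \<in> A. i \<le> t}" "i \<notin> {t \<in> A. j \<le> t}" using assms(2,4) by auto
  then show "{t \<in> A. j \<le> t} \<subset> {t \<in> A. i \<le> t}"
    using assms(4) by auto
qed (use assms(1) in simp)

lemma catalan_rule_132: "catalan_rule [1,3,2]"
proof (rule catalan_ruleI)
  fix m w assume w: "w \<in> Av m [[1,3,2]]"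
  show "inj_on (\<lambda>i. label (ins_max w i) [1,3,2]) (active_sites w [1,3,2])"
  proof (rule inj_onI)
    fix i j assume i: "i \<in> active_sites w [1,3,2]" and j: "j \<in> active_sites w [1,3,2]"
      and "label (ins_max w i) [1,3,2] = label (ins_max w j) [1,3,2]"
    then have "card {t \<in> active_sites w [1,3,2]. i \<le> t} = card {t \<in> active_sites w [1,3,2]. j \<le> t}"
      using label_132_ins[OF w i] label_132_ins[OF w j] by simp
    then show "i = j"
      using card_ge_strict_antimono[OF finite_active_sites i j]
        card_ge_strict_antimono[OF finite_active_sites j i]
      by (cases i j rule: linorder_cases) auto
  qed
next
  fix m w i assume w: "w \<in> Av m [[1,3,2]]" and i: "i \<in> active_sites w [1,3,2]"
  have "{j \<in> active_sites w [1,3,2]. i \<le> j} \<noteq> {}" using i by auto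
  then have "1 \<le> card {j \<in> active_sites w [1,3,2]. i \<le> j}"
    using finite_active_sites by (simp add: Suc_le_eq card_gt_0_iff)
  moreover have "card {j \<in> active_sites w [1,3,2]. i \<le> j} \<le> label w [1,3,2]"
    using finite_active_sites by (intro card_mono) auto
  ultimately show "label (ins_max w i) [1,3,2] \<in> {2..label w [1,3,2] + 1}"
    using label_132_ins[OF w i] by simp
qed

lemma label_132_ins_Suc_iff:
  assumes "w \<in> Av m [[1,3,2]]" "i \<in> active_sites w [1,3,2]"
  shows "label (ins_max w i) [1,3,2] = label w [1,3,2] + 1 \<longleftrightarrow> i = 1"
proof -
  have "{j \<in> active_sites w [1,3,2]. i \<le> j} = active_sites w [1,3,2] \<longleftrightarrow> i = 1"
  proof
    assume "{j \<in> active_sites w [1,3,2]. i \<le> j} = active_sites w [1,3,2]"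
    then have "i \<le> 1" using one_in_active_sites_132[OF assms(1)] by blast
    then show "i = 1" using active_sites_bounds[OF assms(2)] by simp
  qed (use active_sites_bounds in auto)
  moreover have "card {j \<in> active_sites w [1,3,2]. i \<le> j} = label w [1,3,2] \<longleftrightarrow>
      {j \<in> active_sites w [1,3,2]. i \<le> j} = active_sites w [1,3,2]"
    using card_subset_eq[OF finite_active_sites, of "{j \<in> active_sites w [1,3,2]. i \<le> j}"] by auto
  ultimately show ?thesis using label_132_ins[OF assms] by simp
qed

lemma active_sites_132_max_pos:
  assumes "w \<in> Av m [[1,3,2]]" "q < m" "w!q = m" "1 \<le> q"
  shows "q + 2 \<in> active_sites w [1,3,2]"
    and "\<And>t. t \<in> active_sites w [1,3,2] \<Longrightarrow> 2 \<le> t \<Longrightarrow> q + 2 \<le> t"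
proof -
  have w: "is_perm m w" "\<not> contains w [1,3,2]"
    using assms(1) by (auto simp: Av_singleton_iff avoids_def)
  have "\<not> ascent_across w (q + 1)"
  proof
    assume "ascent_across w (q + 1)"
    then obtain a c where ac: "a < q + 1" "q + 1 \<le> c" "c < m" "w!a < w!c"
      unfolding ascent_across_def is_perm_length[OF w(1)] by auto
    have "w!c < w!q" using is_perm_nth_less_max[OF w(1), of c q] ac assms by simp
    then have "a \<noteq> q" using ac by auto
    \<comment> \<open>so \<open>w!a, m, w!c\<close> form a 132\<close>
    then have "contains w [1,3,2]" unfolding contains_132_iff is_perm_length[OF w(1)]
      using ac \<open>w!c < w!q\<close> by (intro exI[of _ a] exI[of _ q] exI[of _ c]) auto
    then show False using w(2) by simp
  qed
  then show "q + 2 \<in> active_sites w [1,3,2]"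
    unfolding active_sites_132[OF assms(1)] using assms(2) by simp
next
  fix t assume t: "t \<in> active_sites w [1,3,2]" "2 \<le> t"
  have w: "is_perm m w" using assms(1) Av_singleton_iff by blast
  show "q + 2 \<le> t"
  proof (rule ccontr)
    assume "\<not> q + 2 \<le> t"
    moreover have "w!0 < w!q" using is_perm_nth_less_max[OF w, of 0 q] assms by simp
    ultimately have "ascent_across w (t - 1)" unfolding ascent_across_def is_perm_length[OF w]
      using t(2) assms(2) by (intro exI[of _ 0] exI[of _ q]) auto
    then show False using t(1) unfolding active_sites_132[OF assms(1)] by simp
  qed
qed

lemma label_132_ins_eq_max_pos:
  assumes "w \<in> Av m [[1,3,2]]" "q < m" "w!q = m" "1 \<le> q"
    and "i \<in> active_sites w [1,3,2]" "2 \<le> i"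
  shows "label (ins_max w i) [1,3,2] = label w [1,3,2] \<longleftrightarrow> i = q + 2"
proof -
  let ?A = "active_sites w [1,3,2]"
  have one: "1 \<in> ?A" and second: "q + 2 \<in> ?A"
    using one_in_active_sites_132[OF assms(1)] active_sites_132_max_pos(1)[OF assms(1-4)] by auto
  have later: "q + 2 \<le> t" if "t \<in> ?A" "2 \<le> t" for t
    using active_sites_132_max_pos(2)[OF assms(1-4) that] .
  show ?thesis
  proof (cases "i = q + 2")
    case True
    then have "{j \<in> ?A. i \<le> j} = ?A - {1}" using later active_sites_bounds by fastforce
    moreover have "0 < card ?A" using one finite_active_sites card_gt_0_iff by blast
    ultimately have "card {j \<in> ?A. i \<le> j} + 1 = card ?A"
      using one finite_active_sites by simp
    then show ?thesis using label_132_ins[OF assms(1,5)] True by simp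
  next
    case False
    then have sub: "{j \<in> ?A. i \<le> j} \<subseteq> ?A - {1, q + 2}" using later[OF assms(5,6)] assms(6) by auto
    have "card {j \<in> ?A. i \<le> j} \<le> card (?A - {1, q + 2})"
      using card_mono[OF _ sub] finite_active_sites by blast
    also have "\<dots> = card ?A - 2" using one second finite_active_sites by (simp add: card_Diff_subset)
    finally have "card {j \<in> ?A. i \<le> j} \<le> card ?A - 2" .
    moreover have "2 \<le> card ?A"
      using card_mono[OF finite_active_sites[of w "[1,3,2]"], of "{1, q + 2}"] one second by simp
    ultimately show ?thesis using label_132_ins[OF assms(1,5)] False by simp
  qed
qed

lemma label_132_ins_eq_iff:
  assumes "w \<in> Av m [[1,3,2]]" "1 \<le> m" "i \<in> active_sites w [1,3,2]"
  shows "\<not> maxfirst w \<and> label (ins_max w i) [1,3,2] = label w [1,3,2] \<longleftrightarrow>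
    2 \<le> i - 1 \<and> w!(i - 1 - 1) = m"
proof (cases "i = 1")
  case True
  then show ?thesis using label_132_ins_Suc_iff[OF assms(1,3)] by simp
next
  case False
  then have i: "2 \<le> i" "i - 2 < m" using active_sites_bounds[OF assms(3)] is_perm_length assms(1)
    by (auto simp: Av_singleton_iff)
  have w: "is_perm m w" using assms(1) Av_singleton_iff by blast
  obtain q where q: "q < m" "w!q = m" using is_perm_obtain_max[OF w assms(2)] .
  have "\<not> maxfirst w \<longleftrightarrow> 1 \<le> q"
    using maxfirst_iff[OF w assms(2)] is_perm_nth_eq_iff[OF w, of 0 q] q by auto
  moreover have "w!(i - 2) = m \<longleftrightarrow> i - 2 = q" using is_perm_nth_eq_iff[OF w i(2) q(1)] q(2) by simp
  ultimately show ?thesis using label_132_ins_eq_max_pos[OF assms(1) q _ assms(3) i(1)] i(1)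
    by (auto simp: numeral_2_eq_2)
qed

lemma maxfirst_ins_132:
  assumes "w \<in> Av m [[1,3,2]]" "1 \<le> m" "i \<in> active_sites w [1,3,2]"
  shows "maxfirst (ins_max w i) \<longleftrightarrow> label (ins_max w i) [1,3,2] = label w [1,3,2] + 1"
proof -
  interpret max_insertion m w i using max_insertion_active_site[OF assms(1,3)] .
  show ?thesis using maxfirst_ins_iff[OF assms(2)] label_132_ins_Suc_iff[OF assms(1,3)] by simp
qed

lemma has_123star_ins_132:
  assumes "w \<in> Av m [[1,3,2]]" "1 \<le> m" "i \<in> active_sites w [1,3,2]"
  shows "has_123star (ins_max w i) \<longleftrightarrow>
    has_123star w \<or> (\<not> maxfirst w \<and> label (ins_max w i) [1,3,2] = label w [1,3,2])"
proof -
  interpret max_insertion m w i using max_insertion_active_site[OF assms(1,3)] .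
  have "\<not> contains z [1,3,2]" using assms(3) unfolding active_sites_def avoids_def by simp
  then show ?thesis using has_123star_ins_iff label_132_ins_eq_iff[OF assms] by simp
qed

section \<open>West's bijection\<close>

lemma statistics_eq_if_signature_eq:
  assumes "x \<in> Av n [[1,2,3]]" "x' \<in> Av n [[1,3,2]]" "signature x [1,2,3] = signature x' [1,3,2]"
  shows "(maxfirst x \<longleftrightarrow> maxfirst x') \<and> (has_132star x \<longleftrightarrow> has_123star x')"
  using assms
proof (induction n arbitrary: x x')
  case 0
  then show ?case using Av_le_1 by (simp add: maxfirst_def has_132star_def has_123star_def)
next
  case (Suc n)
  show ?case
  proof (cases "n = 0")
    case True
    then show ?thesis using Suc.prems Av_le_1[of "Suc n"]
      by (simp add: maxfirst_def has_132star_def has_123star_def)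
  next
    case False
    obtain w i where w: "w \<in> Av n [[1,2,3]]" "i \<in> active_sites w [1,2,3]" "x = ins_max w i"
      using Av_obtain_ins_max[OF Suc.prems(1)] by auto
    obtain w' i' where w': "w' \<in> Av n [[1,3,2]]" "i' \<in> active_sites w' [1,3,2]" "x' = ins_max w' i'"
      using Av_obtain_ins_max[OF Suc.prems(2)] by auto
    have "label x [1,2,3] = label x' [1,3,2]" "signature w [1,2,3] = signature w' [1,3,2]"
      using Suc.prems(3) signature_ins_max[OF w(1) _ w(2)] signature_ins_max[OF w'(1) _ w'(2)]
        w(3) w'(3) False
      by auto
    moreover from this(2) have "label w [1,2,3] = label w' [1,3,2]"
      using label_eq_if_signature_eq[OF w(1) w'(1)] False by simp
    moreover have "(maxfirst w \<longleftrightarrow> maxfirst w') \<and> (has_132star w \<longleftrightarrow> has_123star w')"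
      using Suc.IH[OF w(1) w'(1)] calculation(2) .
    ultimately show ?thesis
      using maxfirst_ins_123[OF w(1) _ w(2)] has_132star_ins_123[OF w(1) _ w(2)]
        maxfirst_ins_132[OF w'(1) _ w'(2)] has_123star_ins_132[OF w'(1) _ w'(2)] w(3) w'(3) False
      by simp
  qed
qed

lemma west_in_Av_and_signature:
  assumes "x \<in> Av n [[1,2,3]]"
  shows "west x \<in> Av n [[1,3,2]]" and "signature (west x) [1,3,2] = signature x [1,2,3]"
proof -
  have len: "length x = n" using assms is_perm_length by (auto simp: Av_singleton_iff)
  have "\<exists>!x'. x' \<in> Av n [[1,3,2]] \<and> signature x' [1,3,2] = signature x [1,2,3]"
  proof (rule ex_ex1I)
    show "\<exists>x'. x' \<in> Av n [[1,3,2]] \<and> signature x' [1,3,2] = signature x [1,2,3]"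
      using signature_image_subset[OF catalan_rule_123 catalan_rule_132, of n] assms by force
  next
    fix x1 x2
    assume "x1 \<in> Av n [[1,3,2]] \<and> signature x1 [1,3,2] = signature x [1,2,3]"
      and "x2 \<in> Av n [[1,3,2]] \<and> signature x2 [1,3,2] = signature x [1,2,3]"
    then show "x1 = x2"
      using inj_on_signature[OF catalan_rule_132, of n] unfolding inj_on_def by auto
  qed
  then have "west x \<in> Av n [[1,3,2]] \<and> signature (west x) [1,3,2] = signature x [1,2,3]"
    unfolding west_def len by (rule theI')
  then show "west x \<in> Av n [[1,3,2]]" "signature (west x) [1,3,2] = signature x [1,2,3]" by auto
qed

lemma bij_betw_west: "bij_betw west (Av n [[1,2,3]]) (Av n [[1,3,2]])"
proof (rule bij_betw_imageI)
  show "inj_on west (Av n [[1,2,3]])"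
    using west_in_Av_and_signature(2) inj_on_signature[OF catalan_rule_123, of n]
    unfolding inj_on_def by metis
  show "west ` Av n [[1,2,3]] = Av n [[1,3,2]]"
  proof
    show "west ` Av n [[1,2,3]] \<subseteq> Av n [[1,3,2]]" using west_in_Av_and_signature(1) by blast
  next
    show "Av n [[1,3,2]] \<subseteq> west ` Av n [[1,2,3]]"
    proof
      fix x' assume x': "x' \<in> Av n [[1,3,2]]"
      then obtain x where x: "x \<in> Av n [[1,2,3]]" "signature x [1,2,3] = signature x' [1,3,2]"
        using signature_image_subset[OF catalan_rule_132 catalan_rule_123, of n] by force
      then have "west x = x'"
        using west_in_Av_and_signature[OF x(1)] x' inj_on_signature[OF catalan_rule_132, of n]
        unfolding inj_on_def by auto
      then show "x' \<in> west ` Av n [[1,2,3]]" using x(1) by blast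
    qed
  qed
qed

lemma has_123star_west_iff:
  assumes "x \<in> Av n [[1,2,3]]"
  shows "has_123star (west x) \<longleftrightarrow> has_132star x"
  using statistics_eq_if_signature_eq[OF assms west_in_Av_and_signature(1)[OF assms]]
    west_in_Av_and_signature(2)[OF assms] by simp

theorem theorem3p18:
  fixes n :: nat
  shows "bij_betw west {x \<in> Av n [[1,2,3]]. \<not> has_132star x}
                       {x \<in> Av n [[1,3,2]]. \<not> has_123star x}
         \<and> card {x \<in> Av n [[1,2,3]]. \<not> has_132star x}
           = card {x \<in> Av n [[1,3,2]]. \<not> has_123star x}"
proof -
  have "bij_betw west {x \<in> Av n [[1,2,3]]. \<not> has_132star x} {x \<in> Av n [[1,3,2]]. \<not> has_123star x}"
    by (intro bij_betw_Collect[OF bij_betw_west]) (simp add: has_123star_west_iff)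
  then show ?thesis using bij_betw_same_card by blast
qed

end
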